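(* Let $\mathcal{Z}=\{z_1,\dots,z_K\}$, $p_i>0$ with $\sum_i p_i=1$, and $\omega_{ij}=\omega_{ji}\ge0$. Let $G$ be the graph on $\{1,\dots,K\}$ with an edge between $i\neq j$ whenever $\omega_{ij}>0$. Then a function $f:\mathcal{Z}\to\mathbb{R}$ minimizes $$\mathcal{L}_{\omega,\mathrm{disc}}(f)=\sum_{i=1}^K\sum_{j=1}^K p_i\,\omega_{ij}\left[\tanh\!\left(\frac{f(z_i)-f(z_j)}{2}\right)-1\right]^2$$ over all functions $\mathcal{Z}\to\mathbb{R}$ if and only if $f(z_i)-\log p_i$ is constant on each connected component of $G$. In particular, if $G$ is connected, the minimizers are exactly $f(z_i)=\log p_i+C$, $C\in\mathbb{R}$. *)

theory Defs
  imports Complex_Main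
begin

definition L_disc :: "nat \<Rightarrow> (nat \<Rightarrow> real) \<Rightarrow> (nat \<Rightarrow> nat \<Rightarrow> real) \<Rightarrow> (nat \<Rightarrow> 'a) \<Rightarrow> ('a \<Rightarrow> real) \<Rightarrow> real" where
  "L_disc K p \<omega> z f =
     (\<Sum>i=1..K. \<Sum>j=1..K. p i * \<omega> i j * (tanh ((f (z i) - f (z j)) / 2) - 1)\<^sup>2)"

definition G_edge :: "nat \<Rightarrow> (nat \<Rightarrow> nat \<Rightarrow> real) \<Rightarrow> nat \<Rightarrow> nat \<Rightarrow> bool" where
  "G_edge K \<omega> i j \<longleftrightarrow> i \<in> {1..K} \<and> j \<in> {1..K} \<and> i \<noteq> j \<and> \<omega> i j > 0"

definition G_conn :: "nat \<Rightarrow> (nat \<Rightarrow> nat \<Rightarrow> real) \<Rightarrow> nat \<Rightarrow> nat \<Rightarrow> bool" where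
  "G_conn K \<omega> i j \<longleftrightarrow> i \<in> {1..K} \<and> j \<in> {1..K} \<and> (G_edge K \<omega>)\<^sup>*\<^sup>* i j"

definition G_connected :: "nat \<Rightarrow> (nat \<Rightarrow> nat \<Rightarrow> real) \<Rightarrow> bool" where
  "G_connected K \<omega> \<longleftrightarrow> (\<forall>i\<in>{1..K}. \<forall>j\<in>{1..K}. G_conn K \<omega> i j)"

end

theory Submission imports Defs begin

text \<open>
  Pair the terms (i, j) and (j, i) of the loss. With a = p i, b = p j and d = f (z i) - f (z j),
  the pair is \<omega> i j times a (tanh (d/2) - 1)^2 + b (tanh (-d/2) - 1)^2, which equals
  4ab/(a+b) plus a square that vanishes exactly when exp d = a/b. Hence twice the loss is
  bounded below by a constant independent of f, with equality iff
  f (z i) - ln (p i) = f (z j) - ln (p j) along every edge of G. As z is injective, the bound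
  is attained (by f (z i) = ln (p i)), so the minimisers are exactly the f with this edge
  property, i.e. with f (z i) - ln (p i) constant on components.
\<close>

lemma tanh_half_minus_one: "tanh ((d::real) / 2) - 1 = - 2 / (exp d + 1)"
proof -
  have "0 < exp d" "0 < 1 + exp d" "0 < exp d + exp d * exp d"
    by (simp_all add: add_pos_pos)
  then show ?thesis
    by (simp add: tanh_real_altdef exp_minus field_simps)
qed

lemma tanh_pair_loss_eq:
  fixes a b d :: real
  assumes "a > 0" "b > 0"
  shows "a * (tanh (d / 2) - 1)\<^sup>2 + b * (tanh (- d / 2) - 1)\<^sup>2
         = 4 * a * b / (a + b) + 4 * (b * exp d - a)\<^sup>2 / ((a + b) * (1 + exp d)\<^sup>2)"
proof -
  define E where "E = exp d"
  have "E > 0" unfolding E_def by simp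
  have "tanh (- d / 2) - 1 = - 2 * E / (E + 1)"
    using tanh_half_minus_one[of "- d"] \<open>E > 0\<close> by (simp add: E_def exp_minus field_simps)
  moreover have "tanh (d / 2) - 1 = - 2 / (E + 1)"
    using tanh_half_minus_one[of d] by (simp add: E_def)
  ultimately have "a * (tanh (d / 2) - 1)\<^sup>2 + b * (tanh (- d / 2) - 1)\<^sup>2
                   = a * (- 2 / (E + 1))\<^sup>2 + b * (- 2 * E / (E + 1))\<^sup>2"
    by (simp only:)
  also have "\<dots> = 4 * (a + b * E\<^sup>2) / (1 + E)\<^sup>2"
    using \<open>E > 0\<close> by (simp add: field_simps)
  also have "\<dots> = 4 * ((a + b * E\<^sup>2) * (a + b)) / ((a + b) * (1 + E)\<^sup>2)"
    using assms by simp
  also have "(a + b * E\<^sup>2) * (a + b) = a * b * (1 + E)\<^sup>2 + (b * E - a)\<^sup>2"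
    by (simp add: power2_eq_square algebra_simps)
  also have "4 * (a * b * (1 + E)\<^sup>2 + (b * E - a)\<^sup>2) / ((a + b) * (1 + E)\<^sup>2)
             = 4 * a * b / (a + b) + 4 * (b * E - a)\<^sup>2 / ((a + b) * (1 + E)\<^sup>2)"
    using assms \<open>E > 0\<close> by (simp add: add_divide_distrib add_pos_pos)
  finally show ?thesis
    unfolding E_def .
qed

lemma tanh_pair_loss_ge:
  fixes a b x y :: real
  assumes "a > 0" "b > 0"
  shows "4 * a * b / (a + b) \<le> a * (tanh ((x - y) / 2) - 1)\<^sup>2 + b * (tanh ((y - x) / 2) - 1)\<^sup>2"
    and "4 * a * b / (a + b) = a * (tanh ((x - y) / 2) - 1)\<^sup>2 + b * (tanh ((y - x) / 2) - 1)\<^sup>2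
         \<longleftrightarrow> x - ln a = y - ln b"
proof -
  define d where "d = x - y"
  have yx: "(y - x) / 2 = - d / 2" unfolding d_def by simp
  have "0 < 1 + exp d"
    using exp_gt_zero[of d] by linarith
  then have "0 < (a + b) * (1 + exp d)\<^sup>2"
    using assms by simp
  then show "4 * a * b / (a + b) \<le> a * (tanh ((x - y) / 2) - 1)\<^sup>2 + b * (tanh ((y - x) / 2) - 1)\<^sup>2"
    unfolding yx d_def[symmetric] tanh_pair_loss_eq[OF assms] by simp
  have "4 * a * b / (a + b) = a * (tanh ((x - y) / 2) - 1)\<^sup>2 + b * (tanh ((y - x) / 2) - 1)\<^sup>2
        \<longleftrightarrow> b * exp d = a"
    unfolding yx d_def[symmetric] tanh_pair_loss_eq[OF assms]
    using assms \<open>0 < 1 + exp d\<close> by simp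
  also have "\<dots> \<longleftrightarrow> exp d = exp (ln a - ln b)"
    using assms by (auto simp: exp_diff field_simps)
  also have "\<dots> \<longleftrightarrow> d = ln a - ln b"
    by simp
  finally show "4 * a * b / (a + b) = a * (tanh ((x - y) / 2) - 1)\<^sup>2 + b * (tanh ((y - x) / 2) - 1)\<^sup>2
        \<longleftrightarrow> x - ln a = y - ln b"
    unfolding d_def by linarith
qed

lemma sum_sum_pairwise_lower_bound:
  fixes M T :: "'a \<Rightarrow> 'a \<Rightarrow> real"
  assumes "finite I" and pair: "\<And>i j. i \<in> I \<Longrightarrow> j \<in> I \<Longrightarrow> M i j \<le> T i j + T j i"
  shows "(\<Sum>i\<in>I. \<Sum>j\<in>I. M i j) \<le> 2 * (\<Sum>i\<in>I. \<Sum>j\<in>I. T i j)"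
    and "(\<Sum>i\<in>I. \<Sum>j\<in>I. M i j) = 2 * (\<Sum>i\<in>I. \<Sum>j\<in>I. T i j)
         \<longleftrightarrow> (\<forall>i\<in>I. \<forall>j\<in>I. M i j = T i j + T j i)"
proof -
  define D where "D i j = T i j + T j i - M i j" for i j
  have D_nonneg: "0 \<le> D i j" if "i \<in> I" "j \<in> I" for i j
    using pair[OF that] unfolding D_def by simp
  have "2 * (\<Sum>i\<in>I. \<Sum>j\<in>I. T i j) = (\<Sum>i\<in>I. \<Sum>j\<in>I. T i j + T j i)"
    using sum.swap[of "\<lambda>i j. T j i" I I] by (simp add: sum.distrib)
  also have "\<dots> = (\<Sum>i\<in>I. \<Sum>j\<in>I. M i j + D i j)"
    by (simp add: D_def)
  also have "\<dots> = (\<Sum>i\<in>I. \<Sum>j\<in>I. M i j) + (\<Sum>i\<in>I. \<Sum>j\<in>I. D i j)"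
    by (simp add: sum.distrib)
  finally have split: "2 * (\<Sum>i\<in>I. \<Sum>j\<in>I. T i j) = (\<Sum>i\<in>I. \<Sum>j\<in>I. M i j) + (\<Sum>i\<in>I. \<Sum>j\<in>I. D i j)" .
  have "0 \<le> (\<Sum>i\<in>I. \<Sum>j\<in>I. D i j)"
    using D_nonneg by (auto intro!: sum_nonneg)
  then show "(\<Sum>i\<in>I. \<Sum>j\<in>I. M i j) \<le> 2 * (\<Sum>i\<in>I. \<Sum>j\<in>I. T i j)"
    unfolding split by simp
  have "(\<Sum>i\<in>I. \<Sum>j\<in>I. D i j) = 0 \<longleftrightarrow> (\<forall>i\<in>I. \<forall>j\<in>I. D i j = 0)"
    using \<open>finite I\<close> D_nonneg by (simp add: sum_nonneg_eq_0_iff sum_nonneg)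
  then show "(\<Sum>i\<in>I. \<Sum>j\<in>I. M i j) = 2 * (\<Sum>i\<in>I. \<Sum>j\<in>I. T i j)
         \<longleftrightarrow> (\<forall>i\<in>I. \<forall>j\<in>I. M i j = T i j + T j i)"
    unfolding split D_def by auto
qed

lemma L_disc_lower_bound:
  assumes ppos: "\<forall>i\<in>{1..K}. p i > 0"
    and wsym: "\<forall>i\<in>{1..K}. \<forall>j\<in>{1..K}. \<omega> i j = \<omega> j i"
    and wnn: "\<forall>i\<in>{1..K}. \<forall>j\<in>{1..K}. \<omega> i j \<ge> 0"
  defines "B \<equiv> \<Sum>i=1..K. \<Sum>j=1..K. \<omega> i j * (4 * p i * p j / (p i + p j))"
  shows "B \<le> 2 * L_disc K p \<omega> z f"
    and "B = 2 * L_disc K p \<omega> z f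
         \<longleftrightarrow> (\<forall>i j. G_edge K \<omega> i j \<longrightarrow> f (z i) - ln (p i) = f (z j) - ln (p j))"
proof -
  define T where "T i j = p i * \<omega> i j * (tanh ((f (z i) - f (z j)) / 2) - 1)\<^sup>2" for i j
  define M where "M i j = \<omega> i j * (4 * p i * p j / (p i + p j))" for i j
  have pair: "M i j \<le> T i j + T j i"
    and pair_eq: "M i j = T i j + T j i \<longleftrightarrow> \<omega> i j = 0 \<or> f (z i) - ln (p i) = f (z j) - ln (p j)"
    if "i \<in> {1..K}" "j \<in> {1..K}" for i j
  proof -
    have "T i j + T j i = \<omega> i j * (p i * (tanh ((f (z i) - f (z j)) / 2) - 1)\<^sup>2
                                   + p j * (tanh ((f (z j) - f (z i)) / 2) - 1)\<^sup>2)"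
      using wsym that unfolding T_def by (simp add: algebra_simps)
    note bound = tanh_pair_loss_ge[of "p i" "p j" "f (z i)" "f (z j)"]
    show "M i j \<le> T i j + T j i"
      unfolding \<open>T i j + T j i = _\<close> M_def
      using ppos wnn that by (intro mult_left_mono bound(1)) auto
    show "M i j = T i j + T j i \<longleftrightarrow> \<omega> i j = 0 \<or> f (z i) - ln (p i) = f (z j) - ln (p j)"
      unfolding \<open>T i j + T j i = _\<close> M_def mult_cancel_left using ppos that bound(2) by simp
  qed
  note sum_bound = sum_sum_pairwise_lower_bound[of "{1..K}" M T, OF finite_atLeastAtMost pair]
  have L: "L_disc K p \<omega> z f = (\<Sum>i=1..K. \<Sum>j=1..K. T i j)"
    unfolding L_disc_def T_def ..
  show "B \<le> 2 * L_disc K p \<omega> z f"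
    unfolding L B_def M_def[symmetric] by (rule sum_bound(1))
  have "B = 2 * L_disc K p \<omega> z f \<longleftrightarrow> (\<forall>i\<in>{1..K}. \<forall>j\<in>{1..K}. M i j = T i j + T j i)"
    unfolding L B_def M_def[symmetric] by (rule sum_bound(2))
  also have "\<dots> \<longleftrightarrow> (\<forall>i\<in>{1..K}. \<forall>j\<in>{1..K}. \<omega> i j = 0 \<or> f (z i) - ln (p i) = f (z j) - ln (p j))"
    using pair_eq by simp
  also have "\<dots> \<longleftrightarrow> (\<forall>i j. G_edge K \<omega> i j \<longrightarrow> f (z i) - ln (p i) = f (z j) - ln (p j))"
    using wnn unfolding G_edge_def by (fastforce simp: less_le)
  finally show "B = 2 * L_disc K p \<omega> z f
         \<longleftrightarrow> (\<forall>i j. G_edge K \<omega> i j \<longrightarrow> f (z i) - ln (p i) = f (z j) - ln (p j))" .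
qed

lemma L_disc_minimal_iff:
  assumes inj: "inj_on z {1..K}"
    and ppos: "\<forall>i\<in>{1..K}. p i > 0"
    and wsym: "\<forall>i\<in>{1..K}. \<forall>j\<in>{1..K}. \<omega> i j = \<omega> j i"
    and wnn: "\<forall>i\<in>{1..K}. \<forall>j\<in>{1..K}. \<omega> i j \<ge> 0"
  shows "(\<forall>g. L_disc K p \<omega> z f \<le> L_disc K p \<omega> z g)
         \<longleftrightarrow> (\<forall>i j. G_edge K \<omega> i j \<longrightarrow> f (z i) - ln (p i) = f (z j) - ln (p j))"
proof -
  let ?B = "\<Sum>i=1..K. \<Sum>j=1..K. \<omega> i j * (4 * p i * p j / (p i + p j))"
  note bound = L_disc_lower_bound[OF ppos wsym wnn]
  define g\<^sub>0 where "g\<^sub>0 = (\<lambda>i. ln (p i)) \<circ> the_inv_into {1..K} z"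
  have "g\<^sub>0 (z i) = ln (p i)" if "i \<in> {1..K}" for i
    unfolding g\<^sub>0_def using the_inv_into_f_f[OF inj that] by simp
  then have attained: "?B = 2 * L_disc K p \<omega> z g\<^sub>0"
    unfolding bound(2) G_edge_def by simp
  show ?thesis
  proof
    assume "\<forall>g. L_disc K p \<omega> z f \<le> L_disc K p \<omega> z g"
    then have "L_disc K p \<omega> z f \<le> L_disc K p \<omega> z g\<^sub>0" ..
    then have "?B = 2 * L_disc K p \<omega> z f"
      using attained bound(1)[of z f] by linarith
    then show "\<forall>i j. G_edge K \<omega> i j \<longrightarrow> f (z i) - ln (p i) = f (z j) - ln (p j)"
      unfolding bound(2) .
  next
    assume "\<forall>i j. G_edge K \<omega> i j \<longrightarrow> f (z i) - ln (p i) = f (z j) - ln (p j)"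
    then have "?B = 2 * L_disc K p \<omega> z f"
      unfolding bound(2) .
    then show "\<forall>g. L_disc K p \<omega> z f \<le> L_disc K p \<omega> z g"
      using bound(1)[of z] by simp
  qed
qed

lemma G_edge_const_iff_G_conn_const:
  "(\<forall>i j. G_edge K \<omega> i j \<longrightarrow> h i = h j) \<longleftrightarrow> (\<forall>i j. G_conn K \<omega> i j \<longrightarrow> h i = h j)"
proof
  assume edge: "\<forall>i j. G_edge K \<omega> i j \<longrightarrow> h i = h j"
  show "\<forall>i j. G_conn K \<omega> i j \<longrightarrow> h i = h j"
  proof (intro allI impI)
    fix i j
    assume "G_conn K \<omega> i j"
    then have "(G_edge K \<omega>)\<^sup>*\<^sup>* i j" unfolding G_conn_def by simp
    then show "h i = h j"
      by (induction rule: rtranclp_induct) (use edge in auto)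
  qed
next
  assume "\<forall>i j. G_conn K \<omega> i j \<longrightarrow> h i = h j"
  then show "\<forall>i j. G_edge K \<omega> i j \<longrightarrow> h i = h j"
    unfolding G_conn_def G_edge_def by auto
qed

lemma G_connected_const_iff:
  assumes "G_connected K \<omega>"
  shows "(\<forall>i j. G_conn K \<omega> i j \<longrightarrow> h i = h j) \<longleftrightarrow> (\<exists>C. \<forall>i\<in>{1..K}. h i = C)"
proof
  assume "\<forall>i j. G_conn K \<omega> i j \<longrightarrow> h i = h j"
  then have "\<forall>i\<in>{1..K}. h i = h 1"
    using assms unfolding G_connected_def by auto
  then show "\<exists>C. \<forall>i\<in>{1..K}. h i = C" ..
qed (auto simp: G_conn_def)

theorem mainTheorem5:
  fixes K :: nat and z :: "nat \<Rightarrow> 'a" and p :: "nat \<Rightarrow> real"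
    and \<omega> :: "nat \<Rightarrow> nat \<Rightarrow> real" and f :: "'a \<Rightarrow> real"
  assumes inj: "inj_on z {1..K}"
    and ppos: "\<forall>i\<in>{1..K}. p i > 0"
    and psum: "(\<Sum>i=1..K. p i) = 1"
    and wsym: "\<forall>i\<in>{1..K}. \<forall>j\<in>{1..K}. \<omega> i j = \<omega> j i"
    and wnn: "\<forall>i\<in>{1..K}. \<forall>j\<in>{1..K}. \<omega> i j \<ge> 0"
  shows "((\<forall>g :: 'a \<Rightarrow> real. L_disc K p \<omega> z f \<le> L_disc K p \<omega> z g)
           \<longleftrightarrow> (\<forall>i j. G_conn K \<omega> i j \<longrightarrow> f (z i) - ln (p i) = f (z j) - ln (p j)))
       \<and> (G_connected K \<omega> \<longrightarrow>
           ((\<forall>g :: 'a \<Rightarrow> real. L_disc K p \<omega> z f \<le> L_disc K p \<omega> z g)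
            \<longleftrightarrow> (\<exists>C::real. \<forall>i\<in>{1..K}. f (z i) = ln (p i) + C)))"
proof -
  define h where "h i = f (z i) - ln (p i)" for i
  have "(\<forall>g. L_disc K p \<omega> z f \<le> L_disc K p \<omega> z g) \<longleftrightarrow> (\<forall>i j. G_conn K \<omega> i j \<longrightarrow> h i = h j)"
    unfolding L_disc_minimal_iff[OF inj ppos wsym wnn] h_def
    by (rule G_edge_const_iff_G_conn_const)
  moreover have "(\<exists>C. \<forall>i\<in>{1..K}. h i = C) \<longleftrightarrow> (\<exists>C. \<forall>i\<in>{1..K}. f (z i) = ln (p i) + C)"
    unfolding h_def by (metis add_diff_cancel_left' diff_add_cancel)
  ultimately show ?thesis
    using G_connected_const_iff[of K \<omega> h] unfolding h_def by auto
qed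

end
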